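(* Let $f(x,W)=\psi\big(\phi(\cdots\phi(\phi(xW^1+b^1)W^2+b^2)\cdots)W^l+b^l\big)$ be a fully-connected neural network with input $x=(x^1,\dots,x^m)\in\mathbb{R}^m$, parameters $W=(W^1,b^1,\dots,W^l,b^l)$ (so the $j$-th neuron of the first hidden layer has pre-activation $\sum_{i=1}^m x^i w^1_{ij}+b^1_j$, where $w^1_{ij}$ is the $(i,j)$ entry of $W^1$), intermediate nonlinearity $\phi$ and output link function $\psi$. Let $D=\{(x_k,y_k)\}_{k=1}^n$ be a training set, let the likelihood be $p(y\mid x,W)=\ell(y,f(x,W))$ for some function $\ell$, with $p(D\mid W)=\prod_{k=1}^n p(y_k\mid x_k,W)$, and let the posterior be $p(W\mid D)\propto p(D\mid W)\,p(W)$ for a prior density $p(W)$. Suppose that for some input index $i$ the feature $x_k^i=0$ for every training input $x_k$, and suppose that for some first-layer neuron $j$ the prior factorizes as $p(W)=p(w^1_{ij})\cdot p(W\setminus w^1_{ij})$, where $W\setminus w^1_{ij}$ denotes all parameters except $w^1_{ij}$. Then the posterior factorizes as $$p(W\mid D)=p(W\setminus w^1_{ij}\mid D)\cdot p(w^1_{ij}),$$ i.e. the marginal posterior of $w^1_{ij}$ coincides with its prior and is independent of the remaining parameters. Consequently, a MAP solution $\arg\max_W p(W\mid D)$ sets $w^1_{ij}$ to a value of maximum prior density $p(w^1_{ij})$.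
   Context: Upper indices on inputs denote features and lower indices denote data points. A MAP solution is a maximizer of the posterior density $p(W\mid D)$. *)

theory Defs
  imports "HOL-Analysis.Analysis"
begin

text \<open>Parameter indices of a fully-connected network with L layers and widths d 0 = m (input),
 d 1, ..., d L.  Wt t i j is the (i,j) entry of the weight matrix W^t (i < d (t-1), j < d t),
 Bt t j is the j-th entry of the bias b^t.  Indices are 0-based.\<close>
datatype pidx = Wt nat nat nat | Bt nat nat

definition param_index :: "nat \<Rightarrow> (nat \<Rightarrow> nat) \<Rightarrow> pidx set" where
  "param_index L d =
     {Wt t i j | t i j. 1 \<le> t \<and> t \<le> L \<and> i < d (t - 1) \<and> j < d t}
   \<union> {Bt t j | t j. 1 \<le> t \<and> t \<le> L \<and> j < d t}"

definition param_measure :: "nat \<Rightarrow> (nat \<Rightarrow> nat) \<Rightarrow> (pidx \<Rightarrow> real) measure" where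
  "param_measure L d = PiM (param_index L d) (\<lambda>_. lborel)"

definition preact :: "(nat \<Rightarrow> nat) \<Rightarrow> nat \<Rightarrow> (pidx \<Rightarrow> real) \<Rightarrow> (nat \<Rightarrow> real) \<Rightarrow> nat \<Rightarrow> real" where
  "preact d t \<theta> h = (\<lambda>j. if j < d t then (\<Sum>i<d (t - 1). h i * \<theta> (Wt t i j)) + \<theta> (Bt t j) else 0)"

fun hidden :: "(real \<Rightarrow> real) \<Rightarrow> (nat \<Rightarrow> nat) \<Rightarrow> (pidx \<Rightarrow> real) \<Rightarrow> (nat \<Rightarrow> real) \<Rightarrow> nat \<Rightarrow> (nat \<Rightarrow> real)" where
  "hidden \<phi> d \<theta> x 0 = x"
| "hidden \<phi> d \<theta> x (Suc t) = (\<lambda>j. \<phi> (preact d (Suc t) \<theta> (hidden \<phi> d \<theta> x t) j))"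

definition net :: "(real \<Rightarrow> real) \<Rightarrow> ((nat \<Rightarrow> real) \<Rightarrow> 'o) \<Rightarrow> nat \<Rightarrow> (nat \<Rightarrow> nat)
    \<Rightarrow> (nat \<Rightarrow> real) \<Rightarrow> (pidx \<Rightarrow> real) \<Rightarrow> 'o" where
  "net \<phi> \<psi> L d x \<theta> = \<psi> (preact d L \<theta> (hidden \<phi> d \<theta> x (L - 1)))"

definition likelihood :: "('y \<Rightarrow> 'o \<Rightarrow> real) \<Rightarrow> ((nat \<Rightarrow> real) \<Rightarrow> (pidx \<Rightarrow> real) \<Rightarrow> 'o)
    \<Rightarrow> (nat \<Rightarrow> nat \<Rightarrow> real) \<Rightarrow> (nat \<Rightarrow> 'y) \<Rightarrow> nat \<Rightarrow> (pidx \<Rightarrow> real) \<Rightarrow> real" where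
  "likelihood lk f xs ys n \<theta> = (\<Prod>k<n. lk (ys k) (f (xs k) \<theta>))"

definition posterior :: "(pidx \<Rightarrow> real) measure \<Rightarrow> ((pidx \<Rightarrow> real) \<Rightarrow> real) \<Rightarrow> ((pidx \<Rightarrow> real) \<Rightarrow> real)
    \<Rightarrow> (pidx \<Rightarrow> real) \<Rightarrow> real" where
  "posterior M lik prior \<theta> = lik \<theta> * prior \<theta> / (\<integral>\<theta>'. lik \<theta>' * prior \<theta>' \<partial>M)"

end

theory Submission
  imports Defs
begin

text \<open>Feature \<open>i\<close> vanishes on every training input, so the first-layer weight \<open>w = w\<^sup>1\<^sub>i\<^sub>j\<close>
  only ever multiplies zero and the likelihood does not depend on it. Together with the factorized
  prior, the posterior along the line \<open>\<theta>(w := x)\<close> is \<open>C * p1 x\<close> with \<open>C\<close> depending only on the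
  other parameters; integrating over \<open>x\<close> against \<open>\<integral>p1 = 1\<close> identifies \<open>C\<close> with the marginal
  posterior. At a MAP point the posterior is positive because the evidence is, so \<open>C > 0\<close> and
  \<open>\<theta> w\<close> maximizes \<open>p1\<close>.\<close>

lemma preact_fun_upd_Wt:
  assumes "s \<noteq> t \<or> h i = 0"
  shows "preact d t (\<theta>(Wt s i j := v)) h = preact d t \<theta> h"
  unfolding preact_def
  by (intro ext if_cong refl arg_cong2[where f="(+)"] sum.cong) (use assms in auto)

lemma hidden_fun_upd_Wt1:
  assumes "x i = 0"
  shows "hidden \<phi> d (\<theta>(Wt 1 i j := v)) x t = hidden \<phi> d \<theta> x t"
proof (induction t)
  case 0
  show ?case by simp
next
  case (Suc t)
  have "preact d (Suc t) (\<theta>(Wt 1 i j := v)) (hidden \<phi> d \<theta> x t) = preact d (Suc t) \<theta> (hidden \<phi> d \<theta> x t)"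
    using assms by (intro preact_fun_upd_Wt) (cases t, auto)
  then show ?case
    by (simp only: hidden.simps Suc.IH)
qed

lemma net_fun_upd_Wt1:
  assumes "x i = 0"
  shows "net \<phi> \<psi> L d x (\<theta>(Wt 1 i j := v)) = net \<phi> \<psi> L d x \<theta>"
proof -
  have "preact d L (\<theta>(Wt 1 i j := v)) (hidden \<phi> d \<theta> x (L - 1)) = preact d L \<theta> (hidden \<phi> d \<theta> x (L - 1))"
    using assms by (intro preact_fun_upd_Wt) (cases "L = 1", auto)
  then show ?thesis
    unfolding net_def hidden_fun_upd_Wt1[of x, OF assms] by simp
qed

lemma likelihood_fun_upd_Wt1:
  assumes "\<forall>k<n. xs k i = 0"
  shows "likelihood lk (net \<phi> \<psi> L d) xs ys n (\<theta>(Wt 1 i j := v)) = likelihood lk (net \<phi> \<psi> L d) xs ys n \<theta>"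
  unfolding likelihood_def using assms by (intro prod.cong refl) (metis lessThan_iff net_fun_upd_Wt1)

lemma likelihood_nonneg:
  assumes "\<forall>y v. 0 \<le> lk y v"
  shows "0 \<le> likelihood lk f xs ys n \<theta>"
  unfolding likelihood_def using assms by (simp add: prod_nonneg)

lemma posterior_maximizer_pos:
  assumes evidence_pos: "0 < (\<integral>\<theta>. lik \<theta> * prior \<theta> \<partial>M)"
    and nonneg: "\<forall>\<theta>\<in>space M. 0 \<le> lik \<theta> * prior \<theta>"
    and max: "\<forall>\<theta>'\<in>space M. posterior M lik prior \<theta>' \<le> posterior M lik prior \<theta>"
  shows "0 < posterior M lik prior \<theta>"
proof (rule ccontr)
  assume "\<not> 0 < posterior M lik prior \<theta>"
  then have "posterior M lik prior \<theta>' \<le> 0" if "\<theta>' \<in> space M" for \<theta>'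
    using max that by (meson not_less order_trans)
  then have "lik \<theta>' * prior \<theta>' \<le> 0" if "\<theta>' \<in> space M" for \<theta>'
    using evidence_pos that by (auto simp: posterior_def divide_le_0_iff)
  with nonneg have "\<forall>\<theta>'\<in>space M. lik \<theta>' * prior \<theta>' = 0"
    by (meson antisym)
  then have "(\<integral>\<theta>. lik \<theta> * prior \<theta> \<partial>M) = (\<integral>\<theta>. 0 \<partial>M)"
    by (intro Bochner_Integration.integral_cong) auto
  with evidence_pos show False
    by simp
qed

lemma marginal_of_proportional_fibre:
  fixes F :: "('a \<Rightarrow> real) \<Rightarrow> real" and p :: "real \<Rightarrow> real"
  assumes "\<And>x. F (\<theta>(w := x)) = C * p x" and "(\<integral>x. p x \<partial>lborel) = 1"
  shows "F \<theta> = (\<integral>x. F (\<theta>(w := x)) \<partial>lborel) * p (\<theta> w)"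
  using assms(1)[of "\<theta> w"] by (simp add: assms)

lemma maximizer_of_proportional_fibre:
  fixes F :: "('a \<Rightarrow> real) \<Rightarrow> real" and p :: "real \<Rightarrow> real"
  assumes fibre: "\<And>x. F (\<theta>(w := x)) = C * p x"
    and p_nonneg: "0 \<le> p (\<theta> w)" and pos: "0 < F \<theta>"
    and max: "\<And>x. F (\<theta>(w := x)) \<le> F \<theta>"
  shows "p x \<le> p (\<theta> w)"
proof -
  have F_self: "F \<theta> = C * p (\<theta> w)"
    using fibre[of "\<theta> w"] by simp
  with pos p_nonneg have "0 < C"
    by (simp add: zero_less_mult_iff)
  moreover have "C * p x \<le> C * p (\<theta> w)"
    using max[of x] by (simp add: fibre F_self)
  ultimately show ?thesis
    by simp
qed

lemma restrict_Diff_fun_upd: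
  assumes "f \<in> extensional I" and "w \<in> I"
  shows "(restrict f (I - {w}))(w := x) = f(w := x)"
  using assms by (auto simp: fun_eq_iff extensional_def)

lemma space_param_measure: "space (param_measure L d) = (\<Pi>\<^sub>E _\<in>param_index L d. UNIV)"
  unfolding param_measure_def by (simp add: space_PiM)

lemma fun_upd_in_space_param_measure:
  assumes "\<theta> \<in> space (param_measure L d)" and "w \<in> param_index L d"
  shows "\<theta>(w := x) \<in> space (param_measure L d)"
  using PiE_fun_upd[OF UNIV_I assms(1)[unfolded space_param_measure], of w x] assms(2)
  by (simp add: space_param_measure insert_absorb)

lemma Wt1_in_param_index:
  assumes "1 \<le> L" and "i < d 0" and "j < d 1"
  shows "Wt 1 i j \<in> param_index L d"
  using assms by (auto simp: param_index_def)

lemma posterior_fun_upd_Wt1_proportional: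
  fixes L :: nat and d :: "nat \<Rightarrow> nat" and i j :: nat
    and prior :: "(pidx \<Rightarrow> real) \<Rightarrow> real" and p1 :: "real \<Rightarrow> real"
  defines "M \<equiv> param_measure L d" and "w \<equiv> Wt 1 i j"
  assumes w_param: "w \<in> param_index L d"
    and zero_feature: "\<forall>k<n. xs k i = 0"
    and factor: "\<forall>\<theta>\<in>space M. prior \<theta> = p1 (\<theta> w) * prest (restrict \<theta> (param_index L d - {w}))"
    and \<theta>: "\<theta> \<in> space M"
  shows "\<exists>C. \<forall>x. posterior M (likelihood lk (net \<phi> \<psi> L d) xs ys n) prior (\<theta>(w := x)) = C * p1 x"
proof -
  let ?lik = "likelihood lk (net \<phi> \<psi> L d) xs ys n"
  have "prior (\<theta>(w := x)) = p1 x * prest (restrict \<theta> (param_index L d - {w}))" for x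
  proof -
    have "restrict (\<theta>(w := x)) (param_index L d - {w}) = restrict \<theta> (param_index L d - {w})"
      by (auto simp: restrict_def)
    with factor show ?thesis
      using fun_upd_in_space_param_measure \<theta> w_param by (simp add: M_def)
  qed
  moreover have "?lik (\<theta>(w := x)) = ?lik \<theta>" for x
    unfolding w_def using zero_feature by (rule likelihood_fun_upd_Wt1)
  ultimately have "posterior M ?lik prior (\<theta>(w := x))
      = (?lik \<theta> * prest (restrict \<theta> (param_index L d - {w})) / (\<integral>\<theta>'. ?lik \<theta>' * prior \<theta>' \<partial>M)) * p1 x"
    for x by (simp add: posterior_def)
  then show ?thesis
    by blast
qed

theorem lemma1:
  fixes \<phi> :: "real \<Rightarrow> real" and \<psi> :: "(nat \<Rightarrow> real) \<Rightarrow> 'o"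
    and L :: nat and d :: "nat \<Rightarrow> nat"
    and lk :: "'y \<Rightarrow> 'o \<Rightarrow> real"
    and xs :: "nat \<Rightarrow> nat \<Rightarrow> real" and ys :: "nat \<Rightarrow> 'y" and n :: nat
    and prior :: "(pidx \<Rightarrow> real) \<Rightarrow> real"
    and p1 :: "real \<Rightarrow> real" and prest :: "(pidx \<Rightarrow> real) \<Rightarrow> real"
    and i j :: nat
  defines "M \<equiv> param_measure L d"
    and "w \<equiv> Wt 1 i j"
    and "R \<equiv> param_index L d - {Wt 1 i j}"
    and "post \<equiv> posterior (param_measure L d) (likelihood lk (net \<phi> \<psi> L d) xs ys n) prior"
  assumes "1 \<le> L"
    and "i < d 0" and "j < d 1"
    and zero_feature: "\<forall>k<n. xs k i = 0"
    and lik_nonneg: "\<forall>y v. 0 \<le> lk y v"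
    and prior_nonneg: "\<forall>\<theta>\<in>space M. 0 \<le> prior \<theta>"
    and prior_density: "(\<integral>\<theta>. prior \<theta> \<partial>M) = 1"
    and factor: "\<forall>\<theta>\<in>space M. prior \<theta> = p1 (\<theta> w) * prest (restrict \<theta> R)"
    and p1_nonneg: "\<forall>x. 0 \<le> p1 x"
    and p1_density: "(\<integral>x. p1 x \<partial>lborel) = 1"
    and evidence_pos: "0 < (\<integral>\<theta>. likelihood lk (net \<phi> \<psi> L d) xs ys n \<theta> * prior \<theta> \<partial>M)"
  shows "(\<forall>\<theta>\<in>space M. post \<theta> = (\<integral>x. post ((restrict \<theta> R)(w := x)) \<partial>lborel) * p1 (\<theta> w))
       \<and> (\<forall>\<theta>\<in>space M. (\<forall>\<theta>'\<in>space M. post \<theta>' \<le> post \<theta>) \<longrightarrow> (\<forall>x. p1 x \<le> p1 (\<theta> w)))"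
proof -
  have w_param: "w \<in> param_index L d"
    unfolding w_def using assms(5-7) by (rule Wt1_in_param_index)
  have max_pos: "0 < post \<theta>" if "\<forall>\<theta>'\<in>space M. post \<theta>' \<le> post \<theta>" for \<theta>
    using evidence_pos that lik_nonneg prior_nonneg unfolding post_def M_def
    by (intro posterior_maximizer_pos) (auto simp: likelihood_nonneg)
  have "post \<theta> = (\<integral>x. post ((restrict \<theta> R)(w := x)) \<partial>lborel) * p1 (\<theta> w)
      \<and> ((\<forall>\<theta>'\<in>space M. post \<theta>' \<le> post \<theta>) \<longrightarrow> (\<forall>x. p1 x \<le> p1 (\<theta> w)))"
    if \<theta>: "\<theta> \<in> space M" for \<theta>
  proof -
    obtain C where fibre: "\<And>x. post (\<theta>(w := x)) = C * p1 x"
      using posterior_fun_upd_Wt1_proportional[where xs=xs and i=i and n=n] w_param zero_feature factor \<theta>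
      unfolding post_def M_def w_def R_def by blast
    have restrict_R: "(restrict \<theta> R)(w := x) = \<theta>(w := x)" for x
      using \<theta> w_param unfolding R_def w_def M_def space_param_measure
      by (intro restrict_Diff_fun_upd) (auto simp: PiE_iff)
    show ?thesis
    proof (intro conjI impI allI)
      show "post \<theta> = (\<integral>x. post ((restrict \<theta> R)(w := x)) \<partial>lborel) * p1 (\<theta> w)"
        unfolding restrict_R by (rule marginal_of_proportional_fibre[OF fibre p1_density])
    next
      fix x assume "\<forall>\<theta>'\<in>space M. post \<theta>' \<le> post \<theta>"
      then show "p1 x \<le> p1 (\<theta> w)"
        using fun_upd_in_space_param_measure[OF \<theta>[unfolded M_def] w_param] p1_nonneg max_pos
        by (intro maximizer_of_proportional_fibre[of post, OF fibre]) (auto simp: M_def)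
    qed
  qed
  then show ?thesis
    by blast
qed

end
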